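(* In the nondeterministic Outcome Logic instance, for every program $C$ and atomic assertions $P,Q$: \[ \vDash\{\!|P|\!\}\,C\,\{\!|Q|\!\}\quad\text{iff}\quad\vDash\langle P\rangle\,C\,\langle Q\oplus\top\rangle, \] where $\vDash\{\!|P|\!\}C\{\!|Q|\!\}$ means: for every $\sigma\in\Sigma$ with $\sigma\vDash_\Sigma P$ there exists $\tau\in[\![C]\!](\sigma)$ with $\tau\vDash_\Sigma Q$.
   Context: Nondeterministic instance: powerset monad ($\mathsf{bind}(S,k)=\bigcup_{x\in S}k(x)$, $\mathsf{unit}(x)=\{x\}$, monoid $(\cup,\emptyset)$); a program $C$ has semantics $[\![C]\!]\colon\Sigma\to2^\Sigma$ (built from $\mathbb{0},\mathbb{1},;,+,{}^\star$ and atomic commands as usual) and $[\![C]\!]^\dagger(S)=\bigcup_{\sigma\in S}[\![C]\!](\sigma)$. Atomic assertions carry a state relation $\vDash_\Sigma$; a set $S$ satisfies atomic $P$ iff $S\neq\emptyset$ and every $\sigma\in S$ satisfies $P$. $S\vDash\top$ always; $S\vDash\varphi\oplus\psi$ iff $S=S_1\cup S_2$ with $S_1\vDash\varphi$, $S_2\vDash\psi$. $\vDash\langle\varphi\rangle C\langle\psi\rangle$ iff every $S\subseteq\Sigma$ with $S\vDash\varphi$ has $[\![C]\!]^\dagger(S)\vDash\psi$. *)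

theory Defs
  imports Main
begin

datatype 'c prog = Zero | One | Seq "'c prog" "'c prog" | Choice "'c prog" "'c prog"
  | Star "'c prog" | Atom 'c

definition lift :: "('s \<Rightarrow> 's set) \<Rightarrow> 's set \<Rightarrow> 's set" where
  "lift f S = (\<Union>\<sigma>\<in>S. f \<sigma>)"

fun sem :: "('c \<Rightarrow> 's \<Rightarrow> 's set) \<Rightarrow> 'c prog \<Rightarrow> 's \<Rightarrow> 's set" where
  "sem act Zero \<sigma> = {}"
| "sem act One \<sigma> = {\<sigma>}"
| "sem act (Seq C1 C2) \<sigma> = lift (sem act C2) (sem act C1 \<sigma>)"
| "sem act (Choice C1 C2) \<sigma> = sem act C1 \<sigma> \<union> sem act C2 \<sigma>"
| "sem act (Star C) \<sigma> = (\<Union>n. (lift (sem act C) ^^ n) {\<sigma>})"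
| "sem act (Atom c) \<sigma> = act c \<sigma>"

datatype 'p assn = AtomA 'p | TopA | OPlus "'p assn" "'p assn"

fun models :: "('s \<Rightarrow> 'p \<Rightarrow> bool) \<Rightarrow> 's set \<Rightarrow> 'p assn \<Rightarrow> bool" where
  "models sat S (AtomA P) = (S \<noteq> {} \<and> (\<forall>\<sigma>\<in>S. sat \<sigma> P))"
| "models sat S TopA = True"
| "models sat S (OPlus \<phi> \<psi>) =
     (\<exists>S1 S2. S = S1 \<union> S2 \<and> models sat S1 \<phi> \<and> models sat S2 \<psi>)"

definition ol_valid :: "('c \<Rightarrow> 's \<Rightarrow> 's set) \<Rightarrow> ('s \<Rightarrow> 'p \<Rightarrow> bool)
    \<Rightarrow> 'p assn \<Rightarrow> 'c prog \<Rightarrow> 'p assn \<Rightarrow> bool" where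
  "ol_valid act sat \<phi> C \<psi> =
     (\<forall>S. models sat S \<phi> \<longrightarrow> models sat (lift (sem act C) S) \<psi>)"

definition under_valid :: "('c \<Rightarrow> 's \<Rightarrow> 's set) \<Rightarrow> ('s \<Rightarrow> 'p \<Rightarrow> bool)
    \<Rightarrow> 'p \<Rightarrow> 'c prog \<Rightarrow> 'p \<Rightarrow> bool" where
  "under_valid act sat P C Q =
     (\<forall>\<sigma>. sat \<sigma> P \<longrightarrow> (\<exists>\<tau>\<in>sem act C \<sigma>. sat \<tau> Q))"

end

theory Submission
  imports Defs
begin

text \<open>The assertion \<open>Q \<oplus> \<top>\<close> holds of a set of outcomes exactly when some outcome
  satisfies \<open>Q\<close>. Since a precondition \<open>P\<close> is satisfied by every nonempty set of
  \<open>P\<close>-states, in particular by singletons, the outcome triple asks for a \<open>Q\<close>-outcome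
  from every \<open>P\<close>-state, which is the under-approximate triple. Nothing about the
  program semantics is used beyond the lifting of a state transformer to sets.\<close>

lemma models_OPlus_TopA_iff:
  "models sat S (OPlus \<phi> TopA) \<longleftrightarrow> (\<exists>S'\<subseteq>S. models sat S' \<phi>)"
  by auto

lemma models_OPlus_AtomA_TopA_iff:
  "models sat S (OPlus (AtomA Q) TopA) \<longleftrightarrow> (\<exists>\<tau>\<in>S. sat \<tau> Q)"
proof -
  have "(\<exists>S'\<subseteq>S. S' \<noteq> {} \<and> (\<forall>\<tau>\<in>S'. sat \<tau> Q)) \<longleftrightarrow> (\<exists>\<tau>\<in>S. sat \<tau> Q)"
  proof
    assume "\<exists>\<tau>\<in>S. sat \<tau> Q"
    then obtain \<tau> where "\<tau> \<in> S" "sat \<tau> Q" by blast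
    then show "\<exists>S'\<subseteq>S. S' \<noteq> {} \<and> (\<forall>\<tau>\<in>S'. sat \<tau> Q)"
      by (intro exI[of _ "{\<tau>}"]) auto
  qed blast
  then show ?thesis
    unfolding models_OPlus_TopA_iff by simp
qed

lemma lift_singleton [simp]: "lift f {\<sigma>} = f \<sigma>"
  by (simp add: lift_def)

lemma reaches_iff_lift_models_OPlus_AtomA_TopA:
  "(\<forall>\<sigma>. sat \<sigma> P \<longrightarrow> (\<exists>\<tau>\<in>f \<sigma>. sat \<tau> Q)) \<longleftrightarrow>
   (\<forall>S. models sat S (AtomA P) \<longrightarrow> models sat (lift f S) (OPlus (AtomA Q) TopA))"
proof
  assume reach: "\<forall>\<sigma>. sat \<sigma> P \<longrightarrow> (\<exists>\<tau>\<in>f \<sigma>. sat \<tau> Q)"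
  show "\<forall>S. models sat S (AtomA P) \<longrightarrow> models sat (lift f S) (OPlus (AtomA Q) TopA)"
  proof (intro allI impI)
    fix S
    assume "models sat S (AtomA P)"
    then obtain \<sigma> where "\<sigma> \<in> S" "sat \<sigma> P" by auto
    with reach obtain \<tau> where "\<tau> \<in> f \<sigma>" "sat \<tau> Q" by blast
    with \<open>\<sigma> \<in> S\<close> have "\<tau> \<in> lift f S" "sat \<tau> Q"
      by (auto simp: lift_def)
    then show "models sat (lift f S) (OPlus (AtomA Q) TopA)"
      unfolding models_OPlus_AtomA_TopA_iff by blast
  qed
next
  assume valid: "\<forall>S. models sat S (AtomA P) \<longrightarrow> models sat (lift f S) (OPlus (AtomA Q) TopA)"
  show "\<forall>\<sigma>. sat \<sigma> P \<longrightarrow> (\<exists>\<tau>\<in>f \<sigma>. sat \<tau> Q)"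
  proof (intro allI impI)
    fix \<sigma>
    assume "sat \<sigma> P"
    then have "models sat {\<sigma>} (AtomA P)" by simp
    with valid have "models sat (f \<sigma>) (OPlus (AtomA Q) TopA)"
      by (metis lift_singleton)
    then show "\<exists>\<tau>\<in>f \<sigma>. sat \<tau> Q"
      unfolding models_OPlus_AtomA_TopA_iff .
  qed
qed

theorem theoremC1:
  fixes act :: "'c \<Rightarrow> 's \<Rightarrow> 's set" and sat :: "'s \<Rightarrow> 'p \<Rightarrow> bool"
    and C :: "'c prog" and P Q :: 'p
  shows "under_valid act sat P C Q \<longleftrightarrow> ol_valid act sat (AtomA P) C (OPlus (AtomA Q) TopA)"
  unfolding under_valid_def ol_valid_def
  by (rule reaches_iff_lift_models_OPlus_AtomA_TopA)

end
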